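(* Let $p$ and $q$ be distinct primes and $n=pq$. Let $c_0,\ldots,c_{n-1}$ be integers such that $$\sum_{k=0}^{n-1}c_k\zeta_n^{-k}=\frac{1}{1-\zeta_n^{-1}}.$$ Let $a_0=0$ and, for $j=1,\ldots,n-1$, let $a_j=\frac{1}{\zeta_n^{-j}-1}+\sum_{k=0}^{n-1}c_k\zeta_n^{-jk}$. Then $G=\mathrm{Circ}(a_0,\ldots,a_{n-1})$ is a non-dense circulant (i.e. $a_j=0$ for some $j\in\{1,\ldots,n-1\}$) with universal perfect state transfer.
   Context: $\zeta_n=e^{2\pi\mathtt{i}/n}$. $\mathrm{Circ}(a_0,\ldots,a_{n-1})$ denotes the $n\times n$ matrix $C$ with $C_{j,k}=a_{k-j}$ (indices mod $n$), viewed as the adjacency matrix of a weighted graph. A graph with adjacency matrix $A$ has universal perfect state transfer if for every pair of vertices $v,w$ there is $t>0$ with $|\langle w|e^{-\mathtt{i} At}|v\rangle|=1$. A circulant is dense if $a_j\ne0$ for all $j=1,\ldots,n-1$. *)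

theory Defs
  imports Complex_Main "Jordan_Normal_Form.Matrix"
begin

definition zeta :: "nat \<Rightarrow> complex" where
  "zeta n = exp (2 * of_real pi * \<i> / of_nat n)"

definition circ_mat :: "nat \<Rightarrow> (nat \<Rightarrow> complex) \<Rightarrow> complex mat" where
  "circ_mat n a = mat n n (\<lambda>(j, k). a ((n + k - j) mod n))"

definition mat_exp :: "complex mat \<Rightarrow> complex mat" where
  "mat_exp A = mat (dim_row A) (dim_col A)
     (\<lambda>(i, j). \<Sum>m. (A ^\<^sub>m m) $$ (i, j) / of_nat (fact m))"

definition universal_pst :: "complex mat \<Rightarrow> bool" where
  "universal_pst A \<longleftrightarrow>
     (\<forall>v < dim_row A. \<forall>w < dim_row A. \<exists>t::real. t > 0 \<and>
        cmod (mat_exp ((- \<i> * of_real t) \<cdot>\<^sub>m A) $$ (w, v)) = 1)"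

definition dense_circ :: "nat \<Rightarrow> (nat \<Rightarrow> complex) \<Rightarrow> bool" where
  "dense_circ n a \<longleftrightarrow> (\<forall>j \<in> {1..<n}. a j \<noteq> 0)"

end

(* Circulants are diagonalised by the discrete Fourier transform: Circ(a) acts on the
   l-th Fourier vector as multiplication by lambda_l = sum_r a_r zeta^(r l), so exp(-i t Circ(a))
   is the circulant with eigenvalues exp(-i t lambda_l).  Using
   sum_(r=1)^(n-1) zeta^(r l) / (zeta^(-r) - 1) = l + sum_(r=1)^(n-1) 1 / (zeta^(-r) - 1)
   and Fourier inversion one finds lambda_l = n c_l + l + kappa for one real kappa.  At
   t = 2 pi s / n the factor exp(-i t lambda_l) is exp(-i t kappa) zeta^(-s l), so the evolution is
   a unimodular multiple of the cyclic shift by s, which sends v to v + s mod n.  The hypothesis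
   on c only makes a_1 vanish; of p and q nothing is used beyond n = p q > 1. *)

theory Submission
  imports "HOL-Analysis.Complex_Transcendental" Defs
begin

definition unity_root :: "nat \<Rightarrow> int \<Rightarrow> complex" where
  "unity_root n k = exp (of_int k * (2 * of_real pi * \<i> / of_nat n))"

lemma zeta_powi_eq_unity_root: "zeta n powi k = unity_root n k"
  unfolding zeta_def unity_root_def by (simp add: exp_power_int)

lemma unity_root_add: "unity_root n (a + b) = unity_root n a * unity_root n b"
  unfolding unity_root_def by (simp only: of_int_add distrib_right exp_add)

lemma unity_root_0 [simp]: "unity_root n 0 = 1"
  unfolding unity_root_def by simp

lemma unity_root_nonzero [simp]: "unity_root n k \<noteq> 0"
  unfolding unity_root_def by simp

lemma unity_root_minus: "unity_root n (- k) = inverse (unity_root n k)"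
  unfolding unity_root_def by (simp add: exp_minus)

lemma cnj_unity_root: "cnj (unity_root n k) = unity_root n (- k)"
  unfolding unity_root_def by (simp add: exp_cnj)

lemma unity_root_mult_of_nat: "unity_root n (d * int l) = unity_root n d ^ l"
proof -
  have "unity_root n (d * int l) = exp (of_nat l * (of_int d * (2 * of_real pi * \<i> / of_nat n)))"
    unfolding unity_root_def by (simp add: algebra_simps)
  then show ?thesis
    unfolding unity_root_def exp_of_nat_mult by simp
qed

lemma unity_root_eq_1_iff:
  assumes "n > 0"
  shows "unity_root n k = 1 \<longleftrightarrow> int n dvd k"
proof -
  have "unity_root n k = 1 \<longleftrightarrow> (\<exists>m::int. 2 * pi * of_int k / of_nat n = of_int (2 * m) * pi)"
    unfolding unity_root_def exp_eq_1 by (simp add: field_simps)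
  also have "\<dots> \<longleftrightarrow> (\<exists>m::int. of_int k = (of_int (m * int n) :: real))"
    using assms by (auto simp: field_simps)
  also have "\<dots> \<longleftrightarrow> int n dvd k"
    by (metis dvd_def mult.commute of_int_eq_iff)
  finally show ?thesis .
qed

lemma unity_root_cong:
  assumes "n > 0" and "int n dvd a - b"
  shows "unity_root n a = unity_root n b"
proof -
  have "a = (a - b) + b" by simp
  then show ?thesis
    using unity_root_add[of n "a - b" b] unity_root_eq_1_iff[OF assms(1)] assms(2) by simp
qed

lemma int_dvd_small_iff:
  fixes x n :: int
  assumes "- n < x" and "x < n"
  shows "n dvd x \<longleftrightarrow> x = 0"
  using dvd_imp_le_int[of x n] assms by (cases "x = 0") auto

lemma sum_unity_root:
  assumes "n > 0"
  shows "(\<Sum>l<n. unity_root n (d * int l)) = (if int n dvd d then of_nat n else 0)"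
proof (cases "int n dvd d")
  case True
  then have "unity_root n (d * int l) = 1" for l
    using unity_root_eq_1_iff[OF assms] by simp
  then show ?thesis
    using True by simp
next
  case False
  then have "unity_root n d \<noteq> 1"
    using unity_root_eq_1_iff[OF assms] by simp
  moreover have "unity_root n d ^ n = 1"
    using unity_root_mult_of_nat[of n d n] unity_root_eq_1_iff[OF assms, of "d * int n"] by simp
  ultimately show ?thesis
    using False geometric_sum[of "unity_root n d" n] by (simp add: unity_root_mult_of_nat)
qed

lemma sum_unity_root_diff:
  assumes "i < n" and "k < n"
  shows "(\<Sum>l<n. unity_root n ((int i - int k) * int l)) = (if i = k then of_nat n else 0)"
  using sum_unity_root[of n "int i - int k"] int_dvd_small_iff[of "int n" "int i - int k"] assms
  by auto

(* The circulant that multiplies the Fourier vector (unity_root n (j * l))_j by beta l. *)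
definition circ_of_spectrum :: "nat \<Rightarrow> (nat \<Rightarrow> complex) \<Rightarrow> complex mat" where
  "circ_of_spectrum n \<beta> =
     mat n n (\<lambda>(i, k). (\<Sum>l<n. \<beta> l * unity_root n ((int i - int k) * int l)) / of_nat n)"

lemma dim_circ_of_spectrum [simp]:
  "dim_row (circ_of_spectrum n \<beta>) = n" "dim_col (circ_of_spectrum n \<beta>) = n"
  unfolding circ_of_spectrum_def by simp_all

lemma index_circ_of_spectrum:
  "i < n \<Longrightarrow> k < n \<Longrightarrow> circ_of_spectrum n \<beta> $$ (i, k)
     = (\<Sum>l<n. \<beta> l * unity_root n ((int i - int k) * int l)) / of_nat n"
  unfolding circ_of_spectrum_def by simp

lemma circ_of_spectrum_cong:
  "(\<And>l. l < n \<Longrightarrow> \<alpha> l = \<beta> l) \<Longrightarrow> circ_of_spectrum n \<alpha> = circ_of_spectrum n \<beta>"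
  unfolding circ_of_spectrum_def by (intro cong_mat refl) (auto intro!: sum.cong)

lemma sum_unity_root_convolution:
  assumes "n > 0" and "l < n" and "l' < n"
  shows "(\<Sum>j<n. unity_root n ((int i - int j) * int l) * unity_root n ((int j - int k) * int l'))
        = (if l = l' then of_nat n * unity_root n ((int i - int k) * int l) else 0)"
proof -
  have "unity_root n ((int i - int j) * int l) * unity_root n ((int j - int k) * int l')
       = unity_root n (int i * int l - int k * int l') * unity_root n ((int l' - int l) * int j)" for j
    by (simp only: unity_root_add[symmetric]) (simp add: algebra_simps)
  then have "(\<Sum>j<n. unity_root n ((int i - int j) * int l) * unity_root n ((int j - int k) * int l'))
     = unity_root n (int i * int l - int k * int l') * (\<Sum>j<n. unity_root n ((int l' - int l) * int j))"
    by (simp add: sum_distrib_left)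
  then show ?thesis
    using sum_unity_root_diff[OF assms(3,2)] by (simp add: algebra_simps)
qed

lemma circ_of_spectrum_mult:
  assumes "n > 0"
  shows "circ_of_spectrum n \<alpha> * circ_of_spectrum n \<beta> = circ_of_spectrum n (\<lambda>l. \<alpha> l * \<beta> l)"
proof (rule eq_matI)
  fix i k
  assume "i < dim_row (circ_of_spectrum n (\<lambda>l. \<alpha> l * \<beta> l))"
    and "k < dim_col (circ_of_spectrum n (\<lambda>l. \<alpha> l * \<beta> l))"
  then have i: "i < n" and k: "k < n"
    by simp_all
  let ?e = "\<lambda>i k l. unity_root n ((int i - int k) * int l)"
  have "(circ_of_spectrum n \<alpha> * circ_of_spectrum n \<beta>) $$ (i, k)
      = (\<Sum>j<n. circ_of_spectrum n \<alpha> $$ (i, j) * circ_of_spectrum n \<beta> $$ (j, k))"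
    using i k by (simp add: scalar_prod_def atLeast0LessThan circ_of_spectrum_def)
  also have "\<dots> = (\<Sum>j<n. \<Sum>l<n. \<Sum>l'<n. \<alpha> l * \<beta> l' * (?e i j l * ?e j k l')) / (of_nat n * of_nat n)"
    using i k by (simp add: index_circ_of_spectrum sum_divide_distrib sum_product mult_ac)
  also have "(\<Sum>j<n. \<Sum>l<n. \<Sum>l'<n. \<alpha> l * \<beta> l' * (?e i j l * ?e j k l'))
      = (\<Sum>l<n. \<Sum>l'<n. \<Sum>j<n. \<alpha> l * \<beta> l' * (?e i j l * ?e j k l'))"
    by (subst sum.swap) (rule sum.cong[OF refl], rule sum.swap)
  also have "\<dots> = (\<Sum>l<n. \<Sum>l'<n. \<alpha> l * \<beta> l' * (\<Sum>j<n. ?e i j l * ?e j k l'))"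
    by (simp only: sum_distrib_left)
  also have "\<dots> = (\<Sum>l<n. \<alpha> l * \<beta> l * (of_nat n * ?e i k l))"
  proof (rule sum.cong[OF refl])
    fix l assume "l \<in> {..<n}"
    then have "(\<Sum>l'<n. \<alpha> l * \<beta> l' * (\<Sum>j<n. ?e i j l * ?e j k l'))
        = (\<Sum>l'<n. if l = l' then \<alpha> l * \<beta> l * (of_nat n * ?e i k l) else 0)"
      by (intro sum.cong refl) (simp add: sum_unity_root_convolution[OF assms])
    then show "(\<Sum>l'<n. \<alpha> l * \<beta> l' * (\<Sum>j<n. ?e i j l * ?e j k l'))
        = \<alpha> l * \<beta> l * (of_nat n * ?e i k l)"
      using \<open>l \<in> {..<n}\<close> by simp
  qed
  finally show "(circ_of_spectrum n \<alpha> * circ_of_spectrum n \<beta>) $$ (i, k)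
      = circ_of_spectrum n (\<lambda>l. \<alpha> l * \<beta> l) $$ (i, k)"
    using assms i k by (simp add: index_circ_of_spectrum sum_distrib_left sum_divide_distrib mult_ac)
qed (simp_all add: circ_of_spectrum_def)

lemma circ_of_spectrum_1: "circ_of_spectrum n (\<lambda>_. 1) = 1\<^sub>m n"
  by (rule eq_matI) (simp_all add: index_circ_of_spectrum sum_unity_root_diff circ_of_spectrum_def)

lemma circ_of_spectrum_power:
  assumes "n > 0"
  shows "circ_of_spectrum n \<beta> ^\<^sub>m m = circ_of_spectrum n (\<lambda>l. \<beta> l ^ m)"
proof (induction m)
  case 0
  show ?case
    using circ_of_spectrum_1[of n] by (simp add: circ_of_spectrum_def)
next
  case (Suc m)
  then show ?case
    by (simp add: circ_of_spectrum_mult[OF assms] mult.commute)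
qed

lemma smult_circ_of_spectrum:
  "c \<cdot>\<^sub>m circ_of_spectrum n \<beta> = circ_of_spectrum n (\<lambda>l. c * \<beta> l)"
  by (rule eq_matI)
    (simp_all add: index_circ_of_spectrum sum_distrib_left mult.assoc circ_of_spectrum_def)

lemma mat_exp_circ_of_spectrum:
  assumes "n > 0"
  shows "mat_exp (circ_of_spectrum n \<beta>) = circ_of_spectrum n (\<lambda>l. exp (\<beta> l))"
proof (rule eq_matI)
  fix i k
  assume "i < dim_row (circ_of_spectrum n (\<lambda>l. exp (\<beta> l)))"
    and "k < dim_col (circ_of_spectrum n (\<lambda>l. exp (\<beta> l)))"
  then have i: "i < n" and k: "k < n"
    by simp_all
  let ?e = "\<lambda>l. unity_root n ((int i - int k) * int l) / of_nat n"
  have exp_sums: "(\<lambda>m. z ^ m / of_nat (fact m)) sums exp z" for z :: complex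
    using exp_converges[of z] by (simp add: scaleR_conv_of_real divide_inverse mult.commute)
  have "(\<lambda>m. \<Sum>l<n. \<beta> l ^ m / of_nat (fact m) * ?e l) sums (\<Sum>l<n. exp (\<beta> l) * ?e l)"
    by (intro sums_sum sums_mult2 exp_sums)
  moreover have "(\<Sum>l<n. \<beta> l ^ m / of_nat (fact m) * ?e l)
      = (circ_of_spectrum n \<beta> ^\<^sub>m m) $$ (i, k) / of_nat (fact m)" for m
    unfolding circ_of_spectrum_power[OF assms] index_circ_of_spectrum[OF i k] sum_divide_distrib
    by (intro sum.cong refl) simp
  ultimately show "mat_exp (circ_of_spectrum n \<beta>) $$ (i, k) = circ_of_spectrum n (\<lambda>l. exp (\<beta> l)) $$ (i, k)"
    using i k by (simp add: mat_exp_def index_circ_of_spectrum sum_divide_distrib sums_iff)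
qed (simp_all add: mat_exp_def circ_of_spectrum_def)

definition circ_eigenvalue :: "nat \<Rightarrow> (nat \<Rightarrow> complex) \<Rightarrow> nat \<Rightarrow> complex" where
  "circ_eigenvalue n a l = (\<Sum>r<n. a r * unity_root n (int r * int l))"

lemma int_dvd_iff_circ_index:
  assumes "i < n" and "k < n" and "r < n"
  shows "int n dvd int r + int i - int k \<longleftrightarrow> r = (n + k - i) mod n"
proof -
  have "int ((n + k - i) mod n) = (int k - int i + int n) mod int n"
    using assms(1) by (simp add: of_nat_mod of_nat_diff algebra_simps)
  also have "\<dots> = (int k - int i) mod int n"
    by simp
  finally have "r = (n + k - i) mod n \<longleftrightarrow> int r mod int n = (int k - int i) mod int n"
    using assms(3) by (metis of_nat_eq_iff mod_less of_nat_mod)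
  also have "\<dots> \<longleftrightarrow> int n dvd int r + int i - int k"
    by (simp add: mod_eq_dvd_iff algebra_simps)
  finally show ?thesis ..
qed

lemma circ_mat_eq_circ_of_spectrum:
  assumes "n > 0"
  shows "circ_mat n a = circ_of_spectrum n (circ_eigenvalue n a)"
proof (rule eq_matI)
  fix i k
  assume "i < dim_row (circ_of_spectrum n (circ_eigenvalue n a))"
    and "k < dim_col (circ_of_spectrum n (circ_eigenvalue n a))"
  then have i: "i < n" and k: "k < n"
    by simp_all
  have "(\<Sum>l<n. circ_eigenvalue n a l * unity_root n ((int i - int k) * int l))
      = (\<Sum>r<n. a r * (\<Sum>l<n. unity_root n ((int r + int i - int k) * int l)))"
    unfolding circ_eigenvalue_def sum_distrib_right sum_distrib_left
    by (subst sum.swap) (simp add: mult.assoc unity_root_add[symmetric] algebra_simps)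
  also have "\<dots> = (\<Sum>r<n. if r = (n + k - i) mod n then of_nat n * a r else 0)"
    by (intro sum.cong refl) (simp add: sum_unity_root[OF assms] int_dvd_iff_circ_index[OF i k])
  also have "\<dots> = of_nat n * a ((n + k - i) mod n)"
    using assms by simp
  finally show "circ_mat n a $$ (i, k) = circ_of_spectrum n (circ_eigenvalue n a) $$ (i, k)"
    using assms i k by (simp add: circ_mat_def index_circ_of_spectrum)
qed (simp_all add: circ_mat_def)

lemma index_circ_of_spectrum_shift:
  assumes "n > 0" and "i < n" and "k < n"
  shows "circ_of_spectrum n (\<lambda>l. unity_root n (- (s * int l))) $$ (i, k)
       = (if int n dvd int i - int k - s then 1 else 0)"
proof -
  have "circ_of_spectrum n (\<lambda>l. unity_root n (- (s * int l))) $$ (i, k)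
      = (\<Sum>l<n. unity_root n ((int i - int k - s) * int l)) / of_nat n"
    using assms(2,3) by (simp add: index_circ_of_spectrum unity_root_add[symmetric] algebra_simps)
  then show ?thesis
    using assms(1) by (simp add: sum_unity_root)
qed

lemma mat_exp_circ_of_spectrum_at_period:
  fixes s :: nat
  assumes "n > 0"
    and spectrum: "\<And>l. l < n \<Longrightarrow> \<exists>m::int. \<beta> l = of_int (int l + int n * m) + of_real \<kappa>"
    and t: "t = 2 * pi * real s / real n"
  shows "mat_exp ((- \<i> * of_real t) \<cdot>\<^sub>m circ_of_spectrum n \<beta>)
       = exp (- \<i> * of_real (t * \<kappa>)) \<cdot>\<^sub>m circ_of_spectrum n (\<lambda>l. unity_root n (- (int s * int l)))"
proof -
  have "exp (- \<i> * of_real t * \<beta> l) = exp (- \<i> * of_real (t * \<kappa>)) * unity_root n (- (int s * int l))"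
    if l: "l < n" for l
  proof -
    obtain m :: int where m: "\<beta> l = of_int (int l + int n * m) + of_real \<kappa>"
      using spectrum[OF l] by blast
    have "- \<i> * of_real t * \<beta> l
        = of_int (- (int s * (int l + int n * m))) * (2 * of_real pi * \<i> / of_nat n)
          + (- \<i> * of_real (t * \<kappa>))"
      using assms(1) unfolding m t by (simp add: field_simps)
    then have "exp (- \<i> * of_real t * \<beta> l)
        = unity_root n (- (int s * (int l + int n * m))) * exp (- \<i> * of_real (t * \<kappa>))"
      unfolding unity_root_def by (simp only: exp_add)
    also have "unity_root n (- (int s * (int l + int n * m))) = unity_root n (- (int s * int l))"
      using assms(1) by (intro unity_root_cong dvdI[where k = "- (int s * m)"]) (simp_all add: algebra_simps)
    finally show ?thesis
      by (simp add: mult.commute)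
  qed
  then show ?thesis
    unfolding smult_circ_of_spectrum mat_exp_circ_of_spectrum[OF assms(1)]
    by (intro circ_of_spectrum_cong) simp
qed

lemma universal_pst_circ_of_spectrum:
  assumes "n > 0"
    and spectrum: "\<And>l. l < n \<Longrightarrow> \<exists>m::int. \<beta> l = of_int (int l + int n * m) + of_real \<kappa>"
  shows "universal_pst (circ_of_spectrum n \<beta>)"
  unfolding universal_pst_def
proof (intro allI impI)
  fix v w
  assume "v < dim_row (circ_of_spectrum n \<beta>)" and "w < dim_row (circ_of_spectrum n \<beta>)"
  then have v: "v < n" and w: "w < n"
    by simp_all
  define s where "s = n + w - v"
  define t where "t = 2 * pi * real s / real n"
  have "t > 0"
    using v assms(1) unfolding s_def t_def by simp
  have "mat_exp ((- \<i> * of_real t) \<cdot>\<^sub>m circ_of_spectrum n \<beta>)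
      = exp (- \<i> * of_real (t * \<kappa>)) \<cdot>\<^sub>m circ_of_spectrum n (\<lambda>l. unity_root n (- (int s * int l)))"
    by (rule mat_exp_circ_of_spectrum_at_period[OF assms t_def])
  moreover have "int n dvd int w - int v - int s"
    using v unfolding s_def by simp
  ultimately have "mat_exp ((- \<i> * of_real t) \<cdot>\<^sub>m circ_of_spectrum n \<beta>) $$ (w, v)
      = exp (- \<i> * of_real (t * \<kappa>))"
    using assms(1) v w by (simp add: index_circ_of_spectrum_shift)
  then show "\<exists>t>0. cmod (mat_exp ((- \<i> * of_real t) \<cdot>\<^sub>m circ_of_spectrum n \<beta>) $$ (w, v)) = 1"
    using \<open>t > 0\<close> by auto
qed

lemma sum_unity_root_from_1:
  assumes "n > 0" and "\<not> int n dvd d"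
  shows "(\<Sum>r\<in>{1..<n}. unity_root n (d * int r)) = -1"
proof -
  have "(\<Sum>r<n. unity_root n (d * int r)) = 1 + (\<Sum>r\<in>{1..<n}. unity_root n (d * int r))"
    using sum.atLeast_Suc_lessThan[OF assms(1), of "\<lambda>r. unity_root n (d * int r)"]
    by (simp add: atLeast0LessThan)
  then show ?thesis
    using sum_unity_root[OF assms(1), of d] assms(2) by (simp add: add_eq_0_iff)
qed

lemma sum_unity_root_div_sub_1:
  assumes "l < n"
  shows "(\<Sum>r\<in>{1..<n}. unity_root n (int r * int l) / (unity_root n (- int r) - 1))
       = (\<Sum>r\<in>{1..<n}. 1 / (unity_root n (- int r) - 1)) + of_nat l"
  using assms
proof (induction l)
  case 0
  then show ?case by simp
next
  case (Suc l)
  \<comment> \<open>zeta^(r(l+1)) - zeta^(r l) = - zeta^(r(l+1)) (zeta^(-r) - 1)\<close>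
  have step: "unity_root n (int r * int (Suc l)) / (unity_root n (- int r) - 1)
      = unity_root n (int r * int l) / (unity_root n (- int r) - 1) - unity_root n (int (Suc l) * int r)"
    if r: "r \<in> {1..<n}" for r
  proof -
    define x where "x = unity_root n (int r)"
    define y where "y = unity_root n (int r * int l)"
    have "x \<noteq> 1"
      using r unity_root_eq_1_iff[of n "int r"] int_dvd_small_iff[of "int n" "int r"]
      unfolding x_def by auto
    moreover have "x \<noteq> 0"
      unfolding x_def by simp
    moreover have "inverse x \<noteq> 1"
      using \<open>x \<noteq> 1\<close> by (simp add: inverse_eq_1_iff)
    moreover have e1: "unity_root n (int r * int (Suc l)) = y * x"
      and e2: "unity_root n (int (Suc l) * int r) = y * x"
      and e3: "unity_root n (- int r) = inverse x"
      unfolding x_def y_def by (simp_all add: unity_root_add[symmetric] unity_root_minus algebra_simps)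
    ultimately show ?thesis
      unfolding e1 e2 e3 y_def[symmetric] by (simp add: field_simps)
  qed
  have "\<not> int n dvd int (Suc l)"
    using Suc.prems int_dvd_small_iff[of "int n" "int (Suc l)"] by simp
  then have "(\<Sum>r\<in>{1..<n}. unity_root n (int (Suc l) * int r)) = -1"
    using Suc.prems by (intro sum_unity_root_from_1) simp_all
  moreover have "(\<Sum>r\<in>{1..<n}. unity_root n (int r * int (Suc l)) / (unity_root n (- int r) - 1))
      = (\<Sum>r\<in>{1..<n}. unity_root n (int r * int l) / (unity_root n (- int r) - 1))
        - (\<Sum>r\<in>{1..<n}. unity_root n (int (Suc l) * int r))"
    unfolding sum_subtractf[symmetric] by (rule sum.cong[OF refl]) (rule step)
  ultimately show ?case
    using Suc by simp
qed

lemma sum_inverse_unity_root_sub_1_real: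
  assumes "n > 0"
  shows "(\<Sum>r\<in>{1..<n}. 1 / (unity_root n (- int r) - 1)) \<in> \<real>"
proof -
  have "cnj (\<Sum>r\<in>{1..<n}. 1 / (unity_root n (- int r) - 1))
      = (\<Sum>r\<in>{1..<n}. 1 / (unity_root n (int r) - 1))"
    by (simp add: cnj_unity_root)
  also have "\<dots> = (\<Sum>r\<in>{1..<n}. 1 / (unity_root n (- int r) - 1))"
  proof (rule sum.reindex_bij_witness[where i = "\<lambda>r. n - r" and j = "\<lambda>r. n - r"])
    fix r
    assume r: "r \<in> {1..<n}"
    have "unity_root n (- int (n - r)) = unity_root n (int r)"
      using r assms by (intro unity_root_cong) auto
    then show "1 / (unity_root n (- int (n - r)) - 1) = 1 / (unity_root n (int r) - 1)"
      by simp
  qed auto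
  finally show ?thesis
    unfolding Reals_cnj_iff .
qed

lemma sum_inverse_dft:
  assumes "n > 0" and "l < n"
  shows "(\<Sum>r<n. (\<Sum>k<n. c k * unity_root n (- (int r * int k))) * unity_root n (int r * int l))
       = of_nat n * c l"
proof -
  have "(\<Sum>r<n. (\<Sum>k<n. c k * unity_root n (- (int r * int k))) * unity_root n (int r * int l))
      = (\<Sum>k<n. c k * (\<Sum>r<n. unity_root n ((int l - int k) * int r)))"
    unfolding sum_distrib_right sum_distrib_left
    by (subst sum.swap) (simp add: mult.assoc unity_root_add[symmetric] algebra_simps)
  also have "\<dots> = (\<Sum>k<n. if k = l then of_nat n * c k else 0)"
    using assms(2) by (intro sum.cong refl) (auto simp: sum_unity_root_diff)
  also have "\<dots> = of_nat n * c l"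
    using assms(2) by simp
  finally show ?thesis .
qed

lemma circ_eigenvalue_integral_shift:
  fixes c :: "nat \<Rightarrow> int"
  assumes "n > 1"
    and a: "a = (\<lambda>j. if j = 0 then 0
                else 1 / (unity_root n (- int j) - 1)
                     + (\<Sum>k<n. of_int (c k) * unity_root n (- (int j * int k))))"
  shows "\<exists>\<kappa>. \<forall>l<n. circ_eigenvalue n a l = of_int (int l + int n * c l) + of_real \<kappa>"
proof -
  define G where "G = (\<Sum>r\<in>{1..<n}. 1 / (unity_root n (- int r) - 1))"
  define C where "C = (\<Sum>k<n. c k)"
  define d where "d r = (\<Sum>k<n. of_int (c k) * unity_root n (- (int r * int k)))" for r
  have split0: "(\<Sum>r<n. f r) = f 0 + (\<Sum>r\<in>{1..<n}. f r)" for f :: "nat \<Rightarrow> complex"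
    using sum.atLeast_Suc_lessThan[of 0 n f] assms(1) by (simp add: atLeast0LessThan)
  have "G \<in> \<real>"
    using sum_inverse_unity_root_sub_1_real assms(1) unfolding G_def by simp
  then obtain \<kappa> where \<kappa>: "G - of_int C = of_real \<kappa>"
    by (metis Reals_cases of_real_diff of_real_of_int_eq)
  have "circ_eigenvalue n a l = of_int (int l + int n * c l) + of_real \<kappa>" if l: "l < n" for l
  proof -
    have "circ_eigenvalue n a l = (\<Sum>r\<in>{1..<n}. a r * unity_root n (int r * int l))"
      unfolding circ_eigenvalue_def split0 by (simp add: a)
    also have "\<dots> = (\<Sum>r\<in>{1..<n}. unity_root n (int r * int l) / (unity_root n (- int r) - 1))
          + (\<Sum>r\<in>{1..<n}. d r * unity_root n (int r * int l))"
      unfolding sum.distrib[symmetric] by (intro sum.cong refl) (simp add: a d_def algebra_simps)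
    also have "(\<Sum>r\<in>{1..<n}. d r * unity_root n (int r * int l)) = of_nat n * of_int (c l) - of_int C"
    proof -
      have "(\<Sum>r<n. d r * unity_root n (int r * int l)) = of_nat n * of_int (c l)"
        using sum_inverse_dft[OF _ l, of "\<lambda>k. of_int (c k)"] assms(1) unfolding d_def by simp
      moreover have "d 0 = of_int C"
        unfolding d_def C_def by simp
      ultimately show ?thesis
        unfolding split0 by (simp add: algebra_simps)
    qed
    finally show ?thesis
      using sum_unity_root_div_sub_1[OF l] \<kappa> unfolding G_def[symmetric]
      by (simp add: algebra_simps)
  qed
  then show ?thesis
    by blast
qed

theorem proposition1:
  fixes p q n :: nat and c :: "nat \<Rightarrow> int" and a :: "nat \<Rightarrow> complex"
  assumes "prime p" and "prime q" and "p \<noteq> q" and "n = p * q"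
    and "(\<Sum>k<n. of_int (c k) * zeta n powi (- int k)) = 1 / (1 - zeta n powi (-1))"
    and "a = (\<lambda>j. if j = 0 then 0
                else 1 / (zeta n powi (- int j) - 1)
                     + (\<Sum>k<n. of_int (c k) * zeta n powi (- int (j * k))))"
  shows "\<not> dense_circ n a \<and> universal_pst (circ_mat n a)"
proof -
  have "n > 1"
    using assms(1,2,4) by (metis less_1_mult prime_gt_1_nat)
  have a: "a = (\<lambda>j. if j = 0 then 0
                else 1 / (unity_root n (- int j) - 1)
                     + (\<Sum>k<n. of_int (c k) * unity_root n (- (int j * int k))))"
    using assms(6) by (simp only: zeta_powi_eq_unity_root of_nat_mult)
  have "a 1 = 1 / (unity_root n (- 1) - 1) + 1 / (1 - unity_root n (- 1))"
    using assms(5) unfolding zeta_powi_eq_unity_root by (simp add: a)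
  also have "\<dots> = 0"
    by (metis add.right_inverse divide_minus_right minus_diff_eq)
  finally have "\<not> dense_circ n a"
    using \<open>n > 1\<close> unfolding dense_circ_def by auto
  moreover obtain \<kappa> where "\<forall>l<n. circ_eigenvalue n a l = of_int (int l + int n * c l) + of_real \<kappa>"
    using circ_eigenvalue_integral_shift[OF \<open>n > 1\<close> a] by blast
  then have "universal_pst (circ_of_spectrum n (circ_eigenvalue n a))"
    using \<open>n > 1\<close> by (intro universal_pst_circ_of_spectrum) auto
  ultimately show ?thesis
    using circ_mat_eq_circ_of_spectrum \<open>n > 1\<close> by simp
qed

end
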